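(* Let $P$ be a convex polygon with no two edges parallel, and let $e_s,e_t$ be edges with $e_s\preceq e_t$. Let $S$ be the set of pairs $(e_i,e_j)$ with $e_i\prec e_j$ and $e_i,e_j\in\{e_s,e_{s+1},\ldots,e_t\}$. Then every point $Z_i^j$ with $(e_i,e_j)\in S$ lies in $\rho=[v_{t+1}\circlearrowright v_s]$, and for $(e_i,e_j)\in S$ and $(e_{i'},e_{j'})\in S$: if $e_i\preceq e_{i'}$ and $e_j\preceq e_{j'}$, then $Z_i^j\le_\rho Z_{i'}^{j'}$.
   Context: $P$ is a compact convex polygon with boundary $\partial P$, edges $e_1,\ldots,e_n$ in clockwise order and vertices $v_1,\ldots,v_n$, $e_i$ the open segment from $v_i$ to $v_{i+1}$ (indices mod $n$); $e_s,e_{s+1},\ldots,e_t$ denotes the edges met going clockwise from $e_s$ to $e_t$. $\ell_i$ is the line containing $e_i$, $\mathsf{I}_{i,j}=\ell_i\cap\ell_j$. $\mathrm{disprod}_{l,l'}(X)=d_l(X)d_{l'}(X)$ where $d_l$ is distance to the line $l$. For distinct edges, $e_i\prec e_j$ means $\mathsf{I}_{i,j}=v_i+t(v_{i+1}-v_i)$ for some $t\ge1$ (equivalently the clockwise turning angle from direction $v_{i+1}-v_i$ to $v_{j+1}-v_j$ is in $(0,\pi)$); $e_i\preceq e_j$ means $e_i=e_j$ or $e_i\prec e_j$. For $e_i\prec e_j$, $Z_i^j$ is the unique point of $P$ maximizing $\mathrm{disprod}_{\ell_i,\ell_j}$ over $P$ (it lies on $\partial P$). $[X\circlearrowright X']$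 is the closed portion of $\partial P$ from $X$ clockwise to $X'$. For a boundary portion $\rho$ and $A,B\in\rho$, $A<_\rho B$ means $A$ is met before $B$ when traversing $\rho$ clockwise, and $A\le_\rho B$ means $A=B$ or $A<_\rho B$. *)

theory Defs
  imports "HOL-Analysis.Analysis"
begin

text \<open>A polygon with n vertices is given by v :: nat => real^2; vertex i is v (i mod n),
  edge e_i is the open segment from vertex i to vertex i+1 (indices mod n).\<close>

definition cross2 :: "real^2 \<Rightarrow> real^2 \<Rightarrow> real" where
  "cross2 a b = a$1 * b$2 - a$2 * b$1"

definition vtx :: "nat \<Rightarrow> (nat \<Rightarrow> real^2) \<Rightarrow> nat \<Rightarrow> real^2" where
  "vtx n v i = v (i mod n)"

definition edir :: "nat \<Rightarrow> (nat \<Rightarrow> real^2) \<Rightarrow> nat \<Rightarrow> real^2" where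
  "edir n v i = vtx n v (Suc i) - vtx n v i"

text \<open>Strictly convex polygon with vertices listed in clockwise order:
  every other vertex lies strictly to the right of each directed edge.\<close>
definition convex_cw_polygon :: "nat \<Rightarrow> (nat \<Rightarrow> real^2) \<Rightarrow> bool" where
  "convex_cw_polygon n v \<longleftrightarrow> n \<ge> 3 \<and>
     (\<forall>i<n. \<forall>k<n. k \<noteq> i \<and> k \<noteq> Suc i mod n \<longrightarrow> cross2 (edir n v i) (v k - v i) < 0)"

definition no_parallel_edges :: "nat \<Rightarrow> (nat \<Rightarrow> real^2) \<Rightarrow> bool" where
  "no_parallel_edges n v \<longleftrightarrow> (\<forall>i<n. \<forall>j<n. i \<noteq> j \<longrightarrow> cross2 (edir n v i) (edir n v j) \<noteq> 0)"

definition poly :: "nat \<Rightarrow> (nat \<Rightarrow> real^2) \<Rightarrow> (real^2) set" where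
  "poly n v = convex hull (v ` {..<n})"

definition eline :: "nat \<Rightarrow> (nat \<Rightarrow> real^2) \<Rightarrow> nat \<Rightarrow> (real^2) set" where
  "eline n v i = {vtx n v i + t *\<^sub>R edir n v i | t. True}"

definition eprec :: "nat \<Rightarrow> (nat \<Rightarrow> real^2) \<Rightarrow> nat \<Rightarrow> nat \<Rightarrow> bool" where
  "eprec n v i j \<longleftrightarrow> i mod n \<noteq> j mod n \<and>
     (\<exists>t\<ge>1. vtx n v i + t *\<^sub>R edir n v i \<in> eline n v j)"

definition epreceq :: "nat \<Rightarrow> (nat \<Rightarrow> real^2) \<Rightarrow> nat \<Rightarrow> nat \<Rightarrow> bool" where
  "epreceq n v i j \<longleftrightarrow> i mod n = j mod n \<or> eprec n v i j"

definition disprod :: "(real^2) set \<Rightarrow> (real^2) set \<Rightarrow> real^2 \<Rightarrow> real" where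
  "disprod l l' X = infdist X l * infdist X l'"

definition Zpt :: "nat \<Rightarrow> (nat \<Rightarrow> real^2) \<Rightarrow> nat \<Rightarrow> nat \<Rightarrow> real^2" where
  "Zpt n v i j = (THE X. X \<in> poly n v \<and>
      (\<forall>Y\<in>poly n v. disprod (eline n v i) (eline n v j) Y \<le> disprod (eline n v i) (eline n v j) X))"

definition edge_range :: "nat \<Rightarrow> nat \<Rightarrow> nat \<Rightarrow> nat set" where
  "edge_range n s t = {(s + k) mod n | k. k \<le> (t + n - s) mod n}"

definition bpath :: "nat \<Rightarrow> (nat \<Rightarrow> real^2) \<Rightarrow> real \<Rightarrow> real^2" where
  "bpath n v x = vtx n v (nat \<lfloor>x\<rfloor>) + (x - of_int \<lfloor>x\<rfloor>) *\<^sub>R edir n v (nat \<lfloor>x\<rfloor>)"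

definition arc_len :: "nat \<Rightarrow> nat \<Rightarrow> nat \<Rightarrow> nat" where
  "arc_len n a b = (b mod n + n - a mod n) mod n"

definition in_arc :: "nat \<Rightarrow> (nat \<Rightarrow> real^2) \<Rightarrow> nat \<Rightarrow> nat \<Rightarrow> real^2 \<Rightarrow> bool" where
  "in_arc n v a b X \<longleftrightarrow>
     (\<exists>p. real (a mod n) \<le> p \<and> p \<le> real (a mod n) + real (arc_len n a b) \<and> bpath n v p = X)"

definition arc_le :: "nat \<Rightarrow> (nat \<Rightarrow> real^2) \<Rightarrow> nat \<Rightarrow> nat \<Rightarrow> real^2 \<Rightarrow> real^2 \<Rightarrow> bool" where
  "arc_le n v a b A B \<longleftrightarrow>
     (\<exists>p q. real (a mod n) \<le> p \<and> p \<le> q \<and> q \<le> real (a mod n) + real (arc_len n a b) \<and>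
            bpath n v p = A \<and> bpath n v q = B)"

end

theory Submission
  imports Defs
begin

text \<open>Write \<open>h\<^sub>k X\<close> for the cross product of \<open>X - v\<^sub>k\<close> with the direction of \<open>e\<^sub>k\<close>: on \<open>P\<close> it is
  \<open>|e\<^sub>k|\<close> times the distance of \<open>X\<close> to \<open>\<ell>\<^sub>k\<close>, so \<open>Z\<^sub>i\<^sup>j\<close> is the unique maximiser of \<open>h\<^sub>i h\<^sub>j\<close> on \<open>P\<close>.
  At the maximiser \<open>Z\<close>, the first-order condition says that \<open>Z\<close> also maximises the linear functional
  \<open>h\<^sub>j(Z) h\<^sub>i + h\<^sub>i(Z) h\<^sub>j\<close>, whose gradient is a positive combination of the directions of \<open>e\<^sub>i\<close>
  and \<open>e\<^sub>j\<close>. The directions of \<open>e\<^sub>s, \<dots>, e\<^sub>t\<close> turn clockwise by less than a half-turn, so no vertex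
  \<open>v\<^sub>s\<^sub>+\<^sub>1, \<dots>, v\<^sub>t\<close> maximises such a functional, and \<open>Z\<^sub>i\<^sup>j\<close> lies on \<open>\<rho>\<close>.
  For \<open>e\<^sub>i \<preceq> e\<^sub>i\<^sub>'\<close> the ratio \<open>h\<^sub>i\<^sub>' / h\<^sub>i\<close> is nondecreasing along \<open>\<rho>\<close>: it is monotone on every edge,
  and the comparisons chain through the vertices. If \<open>Z\<^sub>i\<^sub>'\<^sup>j\<^sup>'\<close> came strictly before \<open>Z\<^sub>i\<^sup>j\<close>, the two ratio
  inequalities multiplied together contradict the maximality of both products unless the two points
  coincide.\<close>

lemma add_mod_eq_add_mod_iff:
  assumes "a < (n::nat)" "b < n"
  shows "(c + a) mod n = (c + b) mod n \<longleftrightarrow> a = b"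
proof
  have le_case: "x = y" if "x \<le> y" "y < n" "(c + x) mod n = (c + y) mod n" for x y
  proof -
    have "n dvd (c + y) - (c + x)" using that mod_eq_dvd_iff_nat[of "c + x" "c + y" n] by simp
    then have "n dvd y - x" by simp
    with that show ?thesis using nat_dvd_not_less[of "y - x" n] by (cases "x = y") auto
  qed
  show "(c + a) mod n = (c + b) mod n \<Longrightarrow> a = b"
    using le_case[of a b] le_case[of b a] assms by (cases "a \<le> b") auto
qed simp

lemma ex_add_mod_eq: "0 < (n::nat) \<Longrightarrow> \<exists>m<n. (s + m) mod n = c mod n"
proof -
  assume n: "0 < n"
  define m where "m = (c mod n + (n - s mod n)) mod n"
  have "s mod n + (c mod n + (n - s mod n)) = c mod n + n"
    using n mod_less_divisor[OF n, of s] by linarith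
  then have "(s mod n + m) mod n = c mod n"
    by (metis m_def mod_add_right_eq mod_add_self2 mod_mod_trivial)
  then have "(s + m) mod n = c mod n" by (simp add: mod_add_left_eq)
  moreover have "m < n" using n by (simp add: m_def)
  ultimately show ?thesis by blast
qed

lemma add_diff_mod_cancel:
  assumes "s < (n::nat)" "t < n"
  shows "(s + (t + n - s) mod n) mod n = t"
proof (cases "s \<le> t")
  case True
  then have "t + n - s = (t - s) + n" by simp
  then have "(t + n - s) mod n = (t - s) mod n" by (simp only: mod_add_self2)
  then have "(t + n - s) mod n = t - s" using assms by simp
  with True assms show ?thesis by simp
next
  case False
  then have "(t + n - s) mod n = t + n - s" using assms by simp
  with False assms show ?thesis by simp
qed

lemma arc_len_add:
  assumes "0 < m" "m < (n::nat)"
  shows "arc_len n (s + m) s = n - m"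
proof -
  define r where "r = s mod n"
  have r: "r < n" using assms by (simp add: r_def)
  have sm: "(s + m) mod n = (r + m) mod n" by (simp add: r_def mod_add_left_eq)
  show ?thesis
  proof (cases "r + m < n")
    case True
    then show ?thesis using sm assms by (simp add: arc_len_def r_def[symmetric])
  next
    case False
    then have "(r + m) mod n = r + m - n" using r assms by (simp add: mod_if)
    then have "r + n - (s + m) mod n = (n - m) + n" using sm False r assms by linarith
    then have "arc_len n (s + m) s = ((n - m) + n) mod n" by (simp only: arc_len_def r_def)
    also have "\<dots> = n - m" using assms by (simp only: mod_add_self2) simp
    finally show ?thesis .
  qed
qed

lemma mult_cross_le_trans:
  fixes a b c A B C :: real
  assumes "a * B \<le> b * A" "b * C \<le> c * B" "0 < B" "0 \<le> A" "0 \<le> C"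
  shows "a * C \<le> c * A"
proof -
  have "a * B * C \<le> b * A * C" "b * C * A \<le> c * B * A"
    using assms by (simp_all add: mult_right_mono)
  then have "B * (a * C) \<le> B * (c * A)" by (simp add: algebra_simps)
  with assms(3) show ?thesis by simp
qed

section \<open>The planar cross product\<close>

lemma cross2_simps:
  "cross2 (a + b) c = cross2 a c + cross2 b c"
  "cross2 c (a + b) = cross2 c a + cross2 c b"
  "cross2 (a - b) c = cross2 a c - cross2 b c"
  "cross2 c (a - b) = cross2 c a - cross2 c b"
  "cross2 (r *\<^sub>R a) c = r * cross2 a c"
  "cross2 c (r *\<^sub>R a) = r * cross2 c a"
  "cross2 (- a) c = - cross2 a c"
  "cross2 c (- a) = - cross2 c a"
  "cross2 a a = 0"
  "cross2 0 a = 0"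
  "cross2 a 0 = 0"
  by (simp_all add: cross2_def algebra_simps)

lemma cross2_antisym: "cross2 a b = - cross2 b a"
  by (simp add: cross2_def)

lemma cross2_pluecker: "cross2 a c * cross2 b d = cross2 a b * cross2 c d + cross2 a d * cross2 b c"
  by (simp add: cross2_def algebra_simps)

lemma cross2_cramer: "cross2 u w *\<^sub>R x = cross2 x w *\<^sub>R u + cross2 u x *\<^sub>R w"
  unfolding cross2_def vec_eq_iff forall_2 by (simp add: algebra_simps)

lemma cross2_eq_0_imp_zero:
  assumes "cross2 a x = 0" "cross2 b x = 0" "cross2 a b \<noteq> 0"
  shows "x = 0"
  using assms cross2_cramer[of a b x] cross2_antisym[of x b] by simp

lemma cross2_sum_left: "finite S \<Longrightarrow> cross2 (\<Sum>x\<in>S. f x) c = (\<Sum>x\<in>S. cross2 (f x) c)"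
  by (induction S rule: finite_induct) (simp_all add: cross2_simps)

lemma cross2_neg_trans:
  assumes "cross2 e x < 0" "cross2 e y < 0" "cross2 e z < 0" "cross2 x y < 0" "cross2 y z < 0"
  shows "cross2 x z < 0"
proof -
  have "cross2 e y * cross2 x z > 0"
    using cross2_pluecker[of e y x z] assms mult_neg_neg[of "cross2 e x" "cross2 y z"]
      mult_neg_neg[of "cross2 e z" "cross2 x y"] cross2_antisym[of x y] by linarith
  with assms(2) show ?thesis by (simp add: zero_less_mult_iff)
qed

lemma lagrange_identity2: "(norm b)\<^sup>2 * (norm d)\<^sup>2 = (b \<bullet> d)\<^sup>2 + (cross2 b d)\<^sup>2"
  unfolding power2_norm_eq_inner inner_vec_def sum_2 cross2_def by (simp add: power2_eq_square algebra_simps)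

lemma dist_line_ge:
  assumes "d \<noteq> 0"
  shows "\<bar>cross2 (x - w) d\<bar> / norm d \<le> dist x (w + t *\<^sub>R d)"
proof -
  define b where "b = x - (w + t *\<^sub>R d)"
  have "cross2 b d = cross2 (x - w) d" by (simp add: b_def cross2_simps)
  moreover have "\<bar>cross2 b d\<bar>\<^sup>2 \<le> (norm b * norm d)\<^sup>2"
    using lagrange_identity2[of b d] by (simp add: power_mult_distrib)
  then have "\<bar>cross2 b d\<bar> \<le> norm b * norm d" by (rule power2_le_imp_le) simp
  ultimately show ?thesis using assms by (simp add: divide_le_eq b_def dist_norm)
qed

lemma dist_foot_of_perpendicular:
  assumes "d \<noteq> 0"
  shows "dist x (w + (((x - w) \<bullet> d) / (d \<bullet> d)) *\<^sub>R d) = \<bar>cross2 (x - w) d\<bar> / norm d"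
proof -
  define a where "a = x - w"
  have dd: "d \<bullet> d > 0" using assms by simp
  have "(norm (a - ((a \<bullet> d) / (d \<bullet> d)) *\<^sub>R d))\<^sup>2 = a \<bullet> a - (a \<bullet> d)\<^sup>2 / (d \<bullet> d)"
    using dd unfolding power2_norm_eq_inner
    by (simp add: inner_diff_left inner_diff_right inner_commute power2_eq_square field_simps)
  also have "\<dots> = (\<bar>cross2 a d\<bar> / norm d)\<^sup>2"
    using lagrange_identity2[of a d] dd
    by (simp add: power_divide power2_norm_eq_inner field_simps)
  finally have "norm (a - ((a \<bullet> d) / (d \<bullet> d)) *\<^sub>R d) = \<bar>cross2 a d\<bar> / norm d"
    by (rule power2_eq_imp_eq) simp_all
  then show ?thesis by (simp add: dist_norm a_def algebra_simps)
qed

lemma infdist_line: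
  assumes "d \<noteq> 0"
  shows "infdist x {w + t *\<^sub>R d | t. True} = \<bar>cross2 (x - w) d\<bar> / norm d"
proof (rule antisym)
  have "w + (((x - w) \<bullet> d) / (d \<bullet> d)) *\<^sub>R d \<in> {w + t *\<^sub>R d | t. True}" by blast
  then show "infdist x {w + t *\<^sub>R d | t. True} \<le> \<bar>cross2 (x - w) d\<bar> / norm d"
    by (rule infdist_le2) (simp add: dist_foot_of_perpendicular[OF assms])
  show "\<bar>cross2 (x - w) d\<bar> / norm d \<le> infdist x {w + t *\<^sub>R d | t. True}"
    unfolding infdist_def by (auto intro!: cINF_greatest dist_line_ge[OF assms])
qed

locale cw_polygon =
  fixes n :: nat and v :: "nat \<Rightarrow> real^2"
  assumes convex: "convex_cw_polygon n v" and no_parallel: "no_parallel_edges n v"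
begin

abbreviation "W \<equiv> vtx n v"
abbreviation "D \<equiv> edir n v"
abbreviation "P \<equiv> poly n v"

definition height :: "nat \<Rightarrow> real^2 \<Rightarrow> real" where
  "height k X = cross2 (X - W k) (D k)"

definition edge_point :: "nat \<Rightarrow> real \<Rightarrow> real^2" where
  "edge_point k l = W k + l *\<^sub>R D k"

lemma n_ge_3: "3 \<le> n"
  using convex by (simp add: convex_cw_polygon_def)

lemma n_pos: "0 < n"
  using n_ge_3 by simp

lemma W_mod: "W (k mod n) = W k"
  by (simp add: vtx_def)

lemma D_mod: "D (k mod n) = D k"
  by (simp add: edir_def vtx_def mod_Suc_eq)

lemma W_Suc: "W (Suc k) = W k + D k"
  by (simp add: edir_def)

lemma W_add_n: "W (k + n) = W k"
  by (simp add: vtx_def)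

lemma D_add_n: "D (k + n) = D k"
  by (metis D_mod mod_add_self2)

lemma W_pred: "W (k + n - 1) + D (k + n - 1) = W k"
  using n_pos W_Suc[of "k + n - 1"] W_add_n[of k] by simp

lemma edge_point_1: "edge_point k 1 = edge_point (Suc k) 0"
  by (simp add: edge_point_def W_Suc)

lemma bpath_edge_point:
  assumes "0 \<le> l" "l \<le> 1"
  shows "bpath n v (real k + l) = edge_point k l"
proof (cases "l = 1")
  case True
  then have "nat \<lfloor>real k + l\<rfloor> = Suc k" by simp
  with True show ?thesis by (simp add: bpath_def edge_point_def edir_def)
next
  case False
  with assms have "\<lfloor>real k + l\<rfloor> = int k" by (simp add: floor_eq_iff)
  then show ?thesis by (simp add: bpath_def edge_point_def)
qed

lemma cross2_edge_vertex_neg: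
  assumes "m mod n \<noteq> k mod n" "m mod n \<noteq> Suc k mod n"
  shows "cross2 (D k) (W m - W k) < 0"
proof -
  have "cross2 (D (k mod n)) (v (m mod n) - v (k mod n)) < 0"
    using convex assms n_pos unfolding convex_cw_polygon_def by (auto simp: mod_Suc_eq)
  then show ?thesis by (simp add: D_mod vtx_def)
qed

lemma edges_not_parallel: "k mod n \<noteq> m mod n \<Longrightarrow> cross2 (D k) (D m) \<noteq> 0"
  using no_parallel n_pos D_mod unfolding no_parallel_edges_def by (metis mod_less_divisor)

lemma edges_turn_cw: "cross2 (D k) (D (Suc k)) < 0"
proof -
  have "(k + 2) mod n \<noteq> (k + 0) mod n" "(k + 2) mod n \<noteq> (k + 1) mod n"
    using add_mod_eq_add_mod_iff[of 2 n 0 k] add_mod_eq_add_mod_iff[of 2 n 1 k] n_ge_3 by simp_all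
  then have "cross2 (D k) (W (k + 2) - W k) < 0" using cross2_edge_vertex_neg[of "k + 2" k] by simp
  moreover have "W (k + 2) - W k = D k + D (Suc k)"
    using W_Suc[of k] W_Suc[of "Suc k"] by (simp add: numeral_2_eq_2)
  ultimately have "cross2 (D k) (D k + D (Suc k)) < 0" by metis
  then show ?thesis by (simp only: cross2_simps)
qed

lemma D_nonzero: "D k \<noteq> 0"
  using edges_turn_cw[of k] by (auto simp: cross2_simps)

lemma height_add: "height k (X + Y) = height k X + cross2 Y (D k)"
  by (simp add: height_def cross2_simps algebra_simps)

lemma height_diff: "height k Y - height k X = cross2 (Y - X) (D k)"
  by (simp add: height_def cross2_simps)

lemma height_edge_point: "height k (edge_point m l) = height k (W m) + l * cross2 (D m) (D k)"
  by (simp add: edge_point_def height_add cross2_simps)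

lemma height_affine: "a + b = 1 \<Longrightarrow> height k (a *\<^sub>R X + b *\<^sub>R Y) = a * height k X + b * height k Y"
proof -
  assume "a + b = 1"
  then have "a *\<^sub>R X + b *\<^sub>R Y - W k = a *\<^sub>R (X - W k) + b *\<^sub>R (Y - W k)"
    by (simp add: algebra_simps scaleR_add_left[symmetric])
  then show ?thesis by (simp add: height_def cross2_simps)
qed

lemma height_W_self: "height k (W k) = 0"
  by (simp add: height_def cross2_simps)

lemma height_W_Suc: "height k (W (Suc k)) = 0"
  by (simp add: height_def W_Suc cross2_simps)

lemma height_W_pos: "m mod n \<noteq> k mod n \<Longrightarrow> m mod n \<noteq> Suc k mod n \<Longrightarrow> 0 < height k (W m)"
  using cross2_edge_vertex_neg[of m k] by (simp add: height_def cross2_antisym[of "W m - W k"])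

lemma height_W_nonneg: "0 \<le> height k (W m)"
  using height_W_pos[of m k] height_W_self[of k] height_W_Suc[of k] W_mod
  by (cases "m mod n = k mod n \<or> m mod n = Suc k mod n") (metis order_refl, fastforce)

section \<open>The directions of the edges turn clockwise\<close>

text \<open>Expand \<open>v\<^sub>b - v\<^sub>b\<^sub>+\<^sub>m\<close> in the directions of the two edges at \<open>v\<^sub>b\<^sub>+\<^sub>m\<close> (Cramer's rule) and take cross
  products with \<open>D b\<close>: convexity at \<open>v\<^sub>b\<^sub>+\<^sub>m\<close> and the two sign hypotheses make the three terms
  incompatible.\<close>
lemma cross2_edge_sign_no_switch_back:
  assumes "3 \<le> m" "m < n"
    and pos: "0 < cross2 (D (b + m)) (D b)"
    and nonpos: "cross2 (D (b + m - 1)) (D b) \<le> 0"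
  shows False
proof -
  define c where "c = b + m - 1"
  have c: "Suc c = b + m" using assms by (simp add: c_def)
  have bm: "b mod n \<noteq> (b + m) mod n" "(b + m) mod n \<noteq> Suc b mod n" "b mod n \<noteq> c mod n"
    using add_mod_eq_add_mod_iff[of 0 n m b] add_mod_eq_add_mod_iff[of m n 1 b]
      add_mod_eq_add_mod_iff[of 0 n "m - 1" b] assms by (simp_all add: c_def)
  define u where "u = D (Suc c)"
  define w where "w = - D c"
  define x where "x = W b - W (Suc c)"
  have uw: "cross2 u w < 0"
    using edges_turn_cw[of c] by (simp add: u_def w_def cross2_simps cross2_antisym[of "D (Suc c)"])
  have xb: "cross2 x (D b) < 0"
    using height_W_pos[of "Suc c" b] c bm by (simp add: x_def height_def cross2_simps)
  have ub: "cross2 u (D b) > 0" using pos c by (simp add: u_def)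
  have wb: "cross2 w (D b) \<ge> 0" using nonpos by (simp add: c_def w_def cross2_simps)
  have "cross2 (D c) (W b - W c) < 0"
    using cross2_edge_vertex_neg[of b c] bm c by simp
  then have xw: "cross2 x w < 0"
    by (simp add: x_def w_def W_Suc cross2_simps cross2_antisym[of "W b" "D c"]
        cross2_antisym[of "W c" "D c"])
  have ux: "cross2 u x \<le> 0"
  proof (cases "b mod n = Suc (Suc c) mod n")
    case True
    then show ?thesis by (metis W_mod W_Suc u_def x_def add_diff_cancel_left' cross2_simps(9) order_refl)
  next
    case False
    then show ?thesis using cross2_edge_vertex_neg[of b "Suc c"] bm c by (simp add: u_def x_def)
  qed
  have "cross2 u w * cross2 x (D b) = cross2 x w * cross2 u (D b) + cross2 u x * cross2 w (D b)"
    using arg_cong[OF cross2_cramer[of u w x], of "\<lambda>y. cross2 y (D b)"] by (simp add: cross2_simps)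
  moreover have "cross2 u w * cross2 x (D b) > 0" using uw xb by (simp add: mult_neg_neg)
  moreover have "cross2 x w * cross2 u (D b) < 0" using xw ub by (simp add: mult_neg_pos)
  moreover have "cross2 u x * cross2 w (D b) \<le> 0" using ux wb by (simp add: mult_nonpos_nonneg)
  ultimately show False by linarith
qed

lemma cross2_edge_neg_prefix:
  assumes g: "g < n" and neg: "cross2 (D b) (D (b + g)) < 0" and m: "1 \<le> m" "m \<le> g"
  shows "cross2 (D b) (D (b + m)) < 0"
proof (rule ccontr)
  assume "\<not> ?thesis"
  moreover have "cross2 (D b) (D (b + m)) \<noteq> 0"
    using edges_not_parallel[of b "b + m"] add_mod_eq_add_mod_iff[of 0 n m b] m g by simp
  ultimately have bm: "cross2 (D (b + m)) (D b) < 0" using cross2_antisym[of "D b" "D (b + m)"] by linarith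
  have "m \<noteq> 1" using edges_turn_cw[of b] bm cross2_antisym[of "D b"] by auto
  define Q where "Q = (\<lambda>k. m < k \<and> k \<le> g \<and> 0 < cross2 (D (b + k)) (D b))"
  have "m \<noteq> g" using bm neg cross2_antisym[of "D b"] by auto
  then have "Q g" using m neg cross2_antisym[of "D b"] by (auto simp: Q_def)
  define k where "k = (LEAST k. Q k)"
  have Qk: "Q k" using LeastI[of Q g] \<open>Q g\<close> by (simp add: k_def)
  have "cross2 (D (b + k - 1)) (D b) \<le> 0"
  proof (cases "k - 1 = m")
    case True
    then have "b + k - 1 = b + m" using Qk by (auto simp: Q_def)
    then show ?thesis using bm by simp
  next
    case False
    then have "\<not> Q (k - 1)" using not_less_Least[of "k - 1" Q] Qk by (auto simp: k_def Q_def)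
    then show ?thesis using False Qk by (auto simp: Q_def add_diff_assoc)
  qed
  moreover have "3 \<le> k" "k < n" using Qk g \<open>m \<noteq> 1\<close> m by (auto simp: Q_def)
  ultimately show False using cross2_edge_sign_no_switch_back[of k b] Qk by (auto simp: Q_def)
qed

lemma cross2_edges_neg_within:
  assumes g: "g < n" and neg: "cross2 (D b) (D (b + g)) < 0" and jk: "j < k" "k \<le> g"
  shows "cross2 (D (b + j)) (D (b + k)) < 0"
  using jk
proof (induction k)
  case (Suc k)
  have "cross2 (D b) (D (b + Suc k)) < 0"
    using cross2_edge_neg_prefix[OF g neg, of "Suc k"] Suc.prems by simp
  moreover have "cross2 (D (b + k)) (D (b + Suc k)) < 0"
    using edges_turn_cw[of "b + k"] by simp
  moreover have "cross2 (D b) (D (b + j)) < 0" "cross2 (D b) (D (b + k)) < 0"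
    if "j \<noteq> 0" "j < k"
    using cross2_edge_neg_prefix[OF g neg, of j] cross2_edge_neg_prefix[OF g neg, of k] that Suc.prems
    by simp_all
  ultimately show ?case
    using Suc cross2_neg_trans[of "D b" "D (b + j)" "D (b + k)" "D (b + Suc k)"]
    by (cases "j = k \<or> j = 0") (auto simp: less_Suc_eq)
qed simp

lemma eprec_imp_cross2_neg:
  assumes "eprec n v i j"
  shows "cross2 (D i) (D j) < 0"
proof -
  obtain t r where t: "1 \<le> t" and eq: "W i + t *\<^sub>R D i = W j + r *\<^sub>R D j"
    using assms by (auto simp: eprec_def eline_def)
  have "height j (W i) + t * cross2 (D i) (D j) = height j (W j + r *\<^sub>R D j)"
    using eq height_add[of j "W i" "t *\<^sub>R D i"] by (simp add: cross2_simps)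
  then have "t * cross2 (D i) (D j) \<le> 0"
    using height_W_nonneg[of j i] by (simp add: height_add height_W_self cross2_simps)
  then have "cross2 (D i) (D j) \<le> 0" using t by (simp add: mult_le_0_iff)
  moreover have "cross2 (D i) (D j) \<noteq> 0" using assms edges_not_parallel by (simp add: eprec_def)
  ultimately show ?thesis by linarith
qed

section \<open>The maximiser of \<open>h\<^sub>i h\<^sub>j\<close>\<close>

lemma convex_P: "convex P"
  by (simp add: poly_def convex_convex_hull)

lemma compact_P: "compact P"
  by (simp add: poly_def compact_convex_hull finite_imp_compact)

lemma W_in_vertices: "W k \<in> v ` {..<n}"
  using n_pos by (simp add: vtx_def)

lemma W_in_P: "W k \<in> P"
  using W_in_vertices by (simp add: poly_def hull_inc)

lemma edge_point_in_P: "0 \<le> l \<Longrightarrow> l \<le> 1 \<Longrightarrow> edge_point k l \<in> P"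
proof -
  assume "0 \<le> l" "l \<le> 1"
  moreover have "edge_point k l = (1 - l) *\<^sub>R W k + l *\<^sub>R W (Suc k)"
    by (simp add: edge_point_def W_Suc algebra_simps)
  ultimately show ?thesis using convex_P W_in_P by (simp add: convex_def)
qed

lemma height_nonneg: "X \<in> P \<Longrightarrow> 0 \<le> height k X"
proof -
  assume X: "X \<in> P"
  have "convex {Y. 0 \<le> height k Y}"
    unfolding convex_def by (auto simp: height_affine)
  moreover have "v ` {..<n} \<subseteq> {Y. 0 \<le> height k Y}"
    using height_W_nonneg by (auto simp: vtx_def) (metis height_W_nonneg mod_less vtx_def)
  ultimately have "P \<subseteq> {Y. 0 \<le> height k Y}" unfolding poly_def by (rule hull_minimal[rotated])
  with X show ?thesis by auto
qed

lemma disprod_eq: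
  "X \<in> P \<Longrightarrow> disprod (eline n v i) (eline n v j) X = height i X * height j X / (norm (D i) * norm (D j))"
  using infdist_line[OF D_nonzero] height_nonneg
  by (simp add: disprod_def eline_def height_def)

lemma ex_interior_point: "\<exists>Y\<in>P. \<forall>k. 0 < height k Y"
proof
  define Y where "Y = (1/3) *\<^sub>R W 0 + (2/3) *\<^sub>R ((1/2) *\<^sub>R W 1 + (1/2) *\<^sub>R W 2)"
  show "Y \<in> P" unfolding Y_def using convex_P W_in_P by (simp add: convex_def)
  show "\<forall>k. 0 < height k Y"
  proof
    fix k
    have "height k Y = (height k (W 0) + height k (W 1) + height k (W 2)) / 3"
      by (simp add: Y_def height_affine)
    moreover have "0 < height k (W 0) \<or> 0 < height k (W 1) \<or> 0 < height k (W 2)"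
      using height_W_pos[of 0 k] height_W_pos[of 1 k] height_W_pos[of 2 k] n_ge_3 by fastforce
    moreover have "0 \<le> height k (W 0)" "0 \<le> height k (W 1)" "0 \<le> height k (W 2)"
      using height_W_nonneg by auto
    ultimately have "0 < height k (W 0) + height k (W 1) + height k (W 2)" by linarith
    with \<open>height k Y = _\<close> show "0 < height k Y" by simp
  qed
qed

definition prod_max :: "nat \<Rightarrow> nat \<Rightarrow> real^2 \<Rightarrow> bool" where
  "prod_max i j Z \<longleftrightarrow> Z \<in> P \<and> (\<forall>Y\<in>P. height i Y * height j Y \<le> height i Z * height j Z)"

lemma ex_prod_max: "\<exists>Z. prod_max i j Z"
proof -
  have "continuous_on P (\<lambda>X. height i X * height j X)"
    unfolding height_def cross2_def by (intro continuous_intros)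
  then show ?thesis
    using continuous_attains_sup[OF compact_P] W_in_P unfolding prod_max_def by blast
qed

lemma prod_max_pos:
  assumes "prod_max i j Z"
  shows "0 < height i Z" "0 < height j Z"
proof -
  obtain Y where "Y \<in> P" "\<forall>k. 0 < height k Y" using ex_interior_point by blast
  with assms have "0 < height i Z * height j Z"
    unfolding prod_max_def by (smt (verit) mult_pos_pos)
  moreover have "0 \<le> height i Z" "0 \<le> height j Z" using assms height_nonneg prod_max_def by auto
  ultimately show "0 < height i Z" "0 < height j Z" by (auto simp: zero_less_mult_iff)
qed

text \<open>At the midpoint of two maximisers AM-GM bounds the product from below by the maximum, with
  equality only if both heights agree; as the lines are not parallel, the points then coincide.\<close>
lemma prod_max_unique:
  assumes ij: "cross2 (D i) (D j) \<noteq> 0"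
    and Z: "prod_max i j Z" and Y: "Y \<in> P" "height i Y * height j Y = height i Z * height j Z"
  shows "Y = Z"
proof -
  define a b a' b' where "a = height i Z" "b = height j Z" "a' = height i Y" "b' = height j Y"
  have ab: "0 < a" "0 < b" using prod_max_pos[OF Z] by (auto simp: a_b_a'_b'_def)
  have ab': "0 \<le> a'" "0 \<le> b'" using Y height_nonneg by (auto simp: a_b_a'_b'_def)
  have eq: "a' * b' = a * b" using Y by (simp add: a_b_a'_b'_def)
  define M where "M = (1/2) *\<^sub>R Y + (1/2) *\<^sub>R Z"
  have "M \<in> P" using Y Z convex_P by (simp add: M_def prod_max_def convex_def)
  then have "height i M * height j M \<le> a * b" using Z by (simp add: prod_max_def a_b_a'_b'_def)
  moreover have "height i M = (a' + a) / 2" "height j M = (b' + b) / 2"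
    by (simp_all add: M_def height_affine a_b_a'_b'_def)
  ultimately have "((a' + a) / 2) * ((b' + b) / 2) \<le> a * b" by simp
  then have "a * b' + a' * b \<le> 2 * (a * b)" using eq by (simp add: algebra_simps)
  moreover have "0 \<le> a * b' + a' * b" using ab ab' by simp
  ultimately have "(a * b' + a' * b)\<^sup>2 \<le> (2 * (a * b))\<^sup>2" by (intro power_mono)
  moreover have "(a * b' - a' * b)\<^sup>2 = (a * b' + a' * b)\<^sup>2 - (2 * (a * b))\<^sup>2"
    using eq by (simp add: power2_eq_square algebra_simps)
  ultimately have "(a * b' - a' * b)\<^sup>2 \<le> 0" by simp
  then have e1: "a * b' = a' * b" by simp
  then have "a' * (a' * b) = a * (a * b)" using eq by (metis mult.assoc mult.left_commute)
  then have "a'\<^sup>2 = a\<^sup>2" using ab by (simp add: power2_eq_square)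
  then have "a' = a" using ab ab' by simp
  moreover from this have "b' = b" using e1 ab by simp
  ultimately have "cross2 (D i) (Y - Z) = 0" "cross2 (D j) (Y - Z) = 0"
    using height_diff[of i Y Z] height_diff[of j Y Z]
    by (simp_all add: a_b_a'_b'_def cross2_antisym[of _ "Y - Z"])
  then have "Y - Z = 0" using cross2_eq_0_imp_zero[OF _ _ ij] by blast
  then show "Y = Z" by simp
qed

lemma prod_max_first_order:
  assumes Z: "prod_max i j Z" and Y: "Y \<in> P"
  shows "height j Z * height i Y + height i Z * height j Y \<le> 2 * (height i Z * height j Z)"
proof (rule ccontr)
  define a b a' b' where "a = height i Z" "b = height j Z" "a' = height i Y" "b' = height j Y"
  define K where "K = b * a' + a * b' - 2 * (a * b)"
  define M where "M = (a' - a) * (b' - b)"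
  assume "\<not> ?thesis"
  then have K: "0 < K" by (simp add: K_def a_b_a'_b'_def)
  define e where "e = K / (K + \<bar>M\<bar>)"
  have e: "0 < e" "e \<le> 1" using K by (auto simp: e_def)
  define X where "X = (1 - e) *\<^sub>R Z + e *\<^sub>R Y"
  have "X \<in> P" using Z Y convex_P e by (simp add: X_def prod_max_def convex_def)
  then have "height i X * height j X \<le> a * b" using Z by (simp add: prod_max_def a_b_a'_b'_def)
  then have "((1 - e) * a + e * a') * ((1 - e) * b + e * b') \<le> a * b"
    by (simp add: X_def height_affine a_b_a'_b'_def)
  then have "e * (K + e * M) \<le> 0" by (simp add: K_def M_def algebra_simps)
  then have "K + e * M \<le> 0" using e by (simp add: mult_le_0_iff)
  moreover have "e * \<bar>M\<bar> < K"
    using K by (simp add: e_def divide_less_eq algebra_simps)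
  moreover have "- (e * \<bar>M\<bar>) \<le> e * M"
    using e mult_left_mono[of "- \<bar>M\<bar>" M e] by simp
  ultimately show False by linarith
qed

lemma prod_max_linear_max:
  assumes Z: "prod_max i j Z" and Y: "Y \<in> P"
  shows "cross2 Y (height j Z *\<^sub>R D i + height i Z *\<^sub>R D j) \<le> cross2 Z (height j Z *\<^sub>R D i + height i Z *\<^sub>R D j)"
proof -
  have "height j Z * (height i Y - height i Z) + height i Z * (height j Y - height j Z) \<le> 0"
    using prod_max_first_order[OF Z Y] by (simp add: algebra_simps)
  then show ?thesis by (simp add: height_diff cross2_simps algebra_simps)
qed

lemma Zpt_prod_max:
  assumes ij: "cross2 (D i) (D j) \<noteq> 0"
  shows "prod_max i j (Zpt n v i j)"
proof -
  obtain Z where Z: "prod_max i j Z" using ex_prod_max by blast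
  have c: "0 < norm (D i) * norm (D j)" using D_nonzero by simp
  have "Zpt n v i j = Z"
    unfolding Zpt_def
  proof (rule the_equality)
    show "Z \<in> P \<and> (\<forall>Y\<in>P. disprod (eline n v i) (eline n v j) Y \<le> disprod (eline n v i) (eline n v j) Z)"
      using Z c by (simp add: prod_max_def disprod_eq divide_right_mono)
    fix X
    assume X: "X \<in> P \<and> (\<forall>Y\<in>P. disprod (eline n v i) (eline n v j) Y \<le> disprod (eline n v i) (eline n v j) X)"
    then have "disprod (eline n v i) (eline n v j) Z \<le> disprod (eline n v i) (eline n v j) X"
      using Z by (simp add: prod_max_def)
    then have "height i Z * height j Z \<le> height i X * height j X"
      using X Z c by (simp add: prod_max_def disprod_eq divide_le_cancel)
    then show "X = Z"
      using prod_max_unique[OF ij Z, of X] X Z by (simp add: prod_max_def order_antisym)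
  qed
  with Z show ?thesis by simp
qed

section \<open>Maximising a linear functional on the polygon\<close>

lemma linear_max_vertices_adjacent:
  assumes Dv: "Dv \<noteq> 0"
    and amax: "\<forall>Y\<in>P. cross2 Y Dv \<le> cross2 (W a) Dv" and ab: "cross2 (W b) Dv = cross2 (W a) Dv"
  shows "b mod n = a mod n \<or> b mod n = Suc a mod n \<or> b mod n = (a + n - 1) mod n"
proof (rule ccontr)
  assume b: "\<not> ?thesis"
  define p where "p = a + n - 1"
  define u w x where "u = D a" "w = - D p" "x = W b - W a"
  have pa: "Suc p mod n = a mod n" using n_pos by (simp add: p_def)
  have ux: "cross2 u x < 0" using cross2_edge_vertex_neg[of b a] b by (simp add: u_w_x_def)
  have "cross2 (D p) (W b - W p) < 0"
    using cross2_edge_vertex_neg[of b p] b pa by (simp add: p_def)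
  moreover have "W b - W p = x + D p" using W_pred[of a] by (simp add: u_w_x_def p_def algebra_simps)
  ultimately have wx: "0 < cross2 w x" by (simp add: u_w_x_def cross2_simps)
  have "p mod n \<noteq> a mod n" using add_mod_eq_add_mod_iff[of "n - 1" n 0 a] n_ge_3 by (simp add: p_def)
  then have uw: "cross2 u w \<noteq> 0"
    using edges_not_parallel[of p a] by (simp add: u_w_x_def cross2_simps cross2_antisym[of "D a"])
  have "cross2 (W (Suc a)) Dv \<le> cross2 (W a) Dv" "cross2 (W p) Dv \<le> cross2 (W a) Dv"
    using amax W_in_P by blast+
  moreover have "cross2 (W a) Dv = cross2 (W p) Dv + cross2 (D p) Dv"
    using W_pred[of a] cross2_simps(1) unfolding p_def by metis
  ultimately have u: "cross2 u Dv \<le> 0" and w: "cross2 w Dv \<le> 0"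
    by (simp_all add: u_w_x_def W_Suc cross2_simps)
  have "cross2 u w * cross2 x Dv = cross2 u x * cross2 w Dv - cross2 u Dv * cross2 w x"
    using cross2_pluecker[of u w x Dv] cross2_antisym[of x w] by simp
  moreover have "cross2 u w * cross2 x Dv = 0" using ab by (simp add: u_w_x_def cross2_simps)
  moreover have "0 \<le> cross2 u x * cross2 w Dv" using ux w by (simp add: mult_nonpos_nonpos)
  moreover have "cross2 u Dv * cross2 w x \<le> 0" using u wx by (simp add: mult_nonpos_nonneg)
  ultimately have "cross2 u x * cross2 w Dv = 0" "cross2 u Dv * cross2 w x = 0" by linarith+
  then have "cross2 w Dv = 0" "cross2 u Dv = 0" using ux wx by auto
  then show False using cross2_eq_0_imp_zero[of u Dv w] uw Dv by (simp add: cross2_antisym[of w u])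
qed

lemma linear_max_vertices_within_edge:
  assumes Dv: "Dv \<noteq> 0"
    and mmax: "\<forall>Y\<in>P. cross2 Y Dv \<le> cross2 (W m) Dv"
  shows "\<exists>c. \<forall>k. cross2 (W k) Dv = cross2 (W m) Dv \<longrightarrow> W k = W c \<or> W k = W (Suc c)"
proof -
  define p where "p = m + n - 1"
  have Wp: "W (Suc p) = W m" using W_pred[of m] by (simp add: p_def W_Suc)
  have near: "W k = W m \<or> W k = W (Suc m) \<or> W k = W p" if "cross2 (W k) Dv = cross2 (W m) Dv" for k
    using linear_max_vertices_adjacent[OF Dv mmax that] W_mod unfolding p_def by metis
  show ?thesis
  proof (cases "cross2 (W (Suc m)) Dv = cross2 (W m) Dv")
    case True
    have "cross2 (W p) Dv \<noteq> cross2 (W m) Dv"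
    proof
      assume "cross2 (W p) Dv = cross2 (W m) Dv"
      moreover have "cross2 (W m) Dv = cross2 (W p) Dv + cross2 (D p) Dv"
        using W_pred[of m] cross2_simps(1) unfolding p_def by metis
      ultimately have "cross2 (D m) Dv = 0" "cross2 (D p) Dv = 0"
        using True by (simp_all add: W_Suc cross2_simps)
      moreover have "m mod n \<noteq> p mod n"
        using add_mod_eq_add_mod_iff[of 0 n "n - 1" m] n_ge_3 by (simp add: p_def)
      ultimately show False using cross2_eq_0_imp_zero edges_not_parallel Dv by blast
    qed
    then show ?thesis using near by metis
  next
    case False
    then show ?thesis using near Wp by metis
  qed
qed

lemma linear_max_convex_weights:
  assumes Dv: "Dv \<noteq> 0" and Z: "Z \<in> P" and Zmax: "\<forall>Y\<in>P. cross2 Y Dv \<le> cross2 Z Dv"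
  obtains u c where "\<forall>x\<in>v ` {..<n}. 0 \<le> u x" "sum u (v ` {..<n}) = 1"
    "(\<Sum>x\<in>v ` {..<n}. u x *\<^sub>R x) = Z" "\<forall>x\<in>v ` {..<n}. 0 < u x \<longrightarrow> cross2 x Dv = cross2 Z Dv"
    "\<forall>x\<in>v ` {..<n} - {W c, W (Suc c)}. u x = 0"
proof -
  define S where "S = v ` {..<n}"
  have fS: "finite S" by (simp add: S_def)
  obtain u where u0: "\<forall>x\<in>S. 0 \<le> u x" and u1: "sum u S = 1" and uZ: "(\<Sum>x\<in>S. u x *\<^sub>R x) = Z"
    using Z unfolding poly_def S_def[symmetric] convex_hull_finite[OF fS] by blast
  have "(\<Sum>x\<in>S. u x *\<^sub>R (x - Z)) = 0"
    using u1 uZ by (simp add: scaleR_diff_right sum_subtractf scaleR_sum_left[symmetric])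
  then have "(\<Sum>x\<in>S. u x * (cross2 Z Dv - cross2 x Dv)) = 0"
    using cross2_sum_left[OF fS, of "\<lambda>x. u x *\<^sub>R (x - Z)" Dv]
    by (simp add: cross2_simps sum_subtractf algebra_simps)
  moreover have "\<forall>x\<in>S. 0 \<le> u x * (cross2 Z Dv - cross2 x Dv)"
    using u0 Zmax by (simp add: S_def poly_def hull_inc)
  ultimately have "\<forall>x\<in>S. u x * (cross2 Z Dv - cross2 x Dv) = 0"
    using sum_nonneg_eq_0_iff[OF fS, of "\<lambda>x. u x * (cross2 Z Dv - cross2 x Dv)"] by simp
  then have umax: "\<forall>x\<in>S. 0 < u x \<longrightarrow> cross2 x Dv = cross2 Z Dv" by force
  have "\<exists>x\<in>S. 0 < u x"
  proof (rule ccontr)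
    assume "\<not> ?thesis"
    then have "\<forall>x\<in>S. u x = 0" using u0 by force
    then show False using u1 by simp
  qed
  then obtain m where "m < n" "0 < u (v m)" by (auto simp: S_def)
  then have Wm: "cross2 (W m) Dv = cross2 Z Dv" using umax by (simp add: S_def vtx_def)
  then have "\<forall>Y\<in>P. cross2 Y Dv \<le> cross2 (W m) Dv" using Zmax by simp
  then obtain c where c: "\<forall>k. cross2 (W k) Dv = cross2 (W m) Dv \<longrightarrow> W k = W c \<or> W k = W (Suc c)"
    using linear_max_vertices_within_edge[OF Dv] by blast
  have "\<forall>x\<in>S - {W c, W (Suc c)}. u x = 0"
  proof
    fix x
    assume x: "x \<in> S - {W c, W (Suc c)}"
    then obtain k where "k < n" "x = v k" by (auto simp: S_def)
    then have "x = W k" by (simp add: vtx_def)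
    then show "u x = 0" using c Wm x u0 umax by force
  qed
  with u0 u1 uZ umax show ?thesis using that unfolding S_def by blast
qed

lemma linear_max_on_edge:
  assumes Dv: "Dv \<noteq> 0" and Z: "Z \<in> P" and Zmax: "\<forall>Y\<in>P. cross2 Y Dv \<le> cross2 Z Dv"
  obtains c l where "0 \<le> l" "l \<le> 1" "Z = edge_point c l"
    "l < 1 \<Longrightarrow> cross2 (W c) Dv = cross2 Z Dv" "0 < l \<Longrightarrow> cross2 (W (Suc c)) Dv = cross2 Z Dv"
proof -
  define S where "S = v ` {..<n}"
  have fS: "finite S" by (simp add: S_def)
  obtain u c where u0: "\<forall>x\<in>S. 0 \<le> u x" and u1: "sum u S = 1" and uZ: "(\<Sum>x\<in>S. u x *\<^sub>R x) = Z"
    and umax: "\<forall>x\<in>S. 0 < u x \<longrightarrow> cross2 x Dv = cross2 Z Dv"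
    and zero: "\<forall>x\<in>S - {W c, W (Suc c)}. u x = 0"
    using linear_max_convex_weights[OF Dv Z Zmax] unfolding S_def by blast
  define A where "A = {W c, W (Suc c)}"
  have AS: "A \<subseteq> S" using W_in_vertices by (simp add: A_def S_def)
  have ne: "W c \<noteq> W (Suc c)" using D_nonzero[of c] by (simp add: W_Suc)
  have "sum u S = sum u A" using sum.mono_neutral_right[OF fS AS] zero by (simp add: A_def)
  then have s1: "u (W c) + u (W (Suc c)) = 1" using u1 ne by (simp add: A_def)
  have "(\<Sum>x\<in>S. u x *\<^sub>R x) = (\<Sum>x\<in>A. u x *\<^sub>R x)"
    using sum.mono_neutral_right[OF fS AS, of "\<lambda>x. u x *\<^sub>R x"] zero by (simp add: A_def)
  then have "Z = u (W c) *\<^sub>R W c + u (W (Suc c)) *\<^sub>R W (Suc c)" using uZ ne by (simp add: A_def)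
  also have "\<dots> = edge_point c (u (W (Suc c)))"
    using s1 by (simp add: edge_point_def W_Suc algebra_simps scaleR_add_left[symmetric])
  finally have Zc: "Z = edge_point c (u (W (Suc c)))" .
  have "W c \<in> S" "W (Suc c) \<in> S" using AS by (auto simp: A_def)
  then have "0 \<le> u (W c)" "0 \<le> u (W (Suc c))"
    "0 < u (W c) \<Longrightarrow> cross2 (W c) Dv = cross2 Z Dv"
    "0 < u (W (Suc c)) \<Longrightarrow> cross2 (W (Suc c)) Dv = cross2 Z Dv"
    using u0 umax by auto
  then show ?thesis using that[OF _ _ Zc] s1 by force
qed

lemma ex_vertex_shift:
  obtains m where "m < n" "W c = W (s + m)" "W (Suc c) = W (s + Suc m)" "edge_point c l = edge_point (s + m) l"
proof -
  obtain m where m: "m < n" "(s + m) mod n = c mod n" using ex_add_mod_eq[OF n_pos] by blast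
  have "Suc c mod n = Suc (s + m) mod n" using m(2) by (metis mod_Suc_eq)
  then have "W c = W (s + m)" "W (Suc c) = W (s + Suc m)"
    using m(2) by (metis W_mod, metis W_mod add_Suc_right)
  moreover have "D c = D (s + m)" using m(2) by (metis D_mod)
  ultimately show ?thesis using that m(1) by (simp add: edge_point_def)
qed

lemma Zpt_mod: "Zpt n v (i mod n) (j mod n) = Zpt n v i j"
  by (simp add: Zpt_def eline_def W_mod D_mod)

lemma line_intersection_beyond:
  assumes ij: "cross2 (D i) (D j) < 0"
  obtains I t r where "0 \<le> t" "I = W (Suc i) + t *\<^sub>R D i" "r \<le> 0" "I = W j + r *\<^sub>R D j"
proof -
  define t where "t = height j (W (Suc i)) / - cross2 (D i) (D j)"
  define r where "r = height i (W j) / cross2 (D i) (D j)"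
  define I I' where "I = W (Suc i) + t *\<^sub>R D i" and "I' = W j + r *\<^sub>R D j"
  have "height i I = 0" "height j I' = 0"
    using height_W_Suc[of i] height_W_self[of j]
    by (simp_all add: I_def I'_def height_add cross2_simps)
  moreover have "height j I = height j (W (Suc i)) + t * cross2 (D i) (D j)"
    "height i I' = height i (W j) - r * cross2 (D i) (D j)"
    by (simp_all add: I_def I'_def height_add cross2_simps cross2_antisym[of "D j"])
  then have "height j I = 0" "height i I' = 0" using ij by (simp_all add: t_def r_def)
  ultimately have "cross2 (D i) (I - I') = 0" "cross2 (D j) (I - I') = 0"
    using height_diff[of i I I'] height_diff[of j I I'] by (simp_all add: cross2_antisym[of _ "I - I'"])
  then have "I = I'" using cross2_eq_0_imp_zero[of "D i" "I - I'" "D j"] ij by simp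
  moreover have "0 \<le> t" "r \<le> 0"
    using ij height_W_nonneg[of j "Suc i"] height_W_nonneg[of i j]
    by (simp_all add: t_def r_def divide_nonneg_pos divide_nonneg_neg)
  ultimately show ?thesis using that I_def I'_def by blast
qed

end

section \<open>A range of edges turning by less than a half-turn\<close>

text \<open>The edges \<open>e\<^sub>s, \<dots>, e\<^sub>t\<close> are \<open>e\<^sub>s\<^sub>+\<^sub>k\<close> for \<open>k \<le> L\<close>; the boundary portion \<open>\<rho> = [v\<^sub>t\<^sub>+\<^sub>1 \<circlearrowright> v\<^sub>s]\<close>
  consists of the points \<open>edge_point (s + m) l\<close> with \<open>rho_param m l\<close>, its endpoint \<open>v\<^sub>s\<close> being
  \<open>edge_point (s + n) 0\<close>.\<close>
locale cw_turning_range = cw_polygon +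
  fixes s L :: nat
  assumes L_less: "L < n" and L_pos: "0 < L" and range_turns: "cross2 (D s) (D (s + L)) < 0"
begin

definition rho_param :: "nat \<Rightarrow> real \<Rightarrow> bool" where
  "rho_param m l \<longleftrightarrow> L + 1 \<le> m \<and> 0 \<le> l \<and> l \<le> 1 \<and> real m + l \<le> real n"

lemma turns_within_range: "a < b \<Longrightarrow> b \<le> L \<Longrightarrow> cross2 (D (s + a)) (D (s + b)) < 0"
  using cross2_edges_neg_within[OF L_less range_turns] by blast

lemma L_le: "L \<le> n - 2"
proof (rule ccontr)
  assume "\<not> ?thesis"
  then have "Suc (s + L) = s + n" using L_less by simp
  then have "D (Suc (s + L)) = D s" using D_add_n[of s] by metis
  then have "cross2 (D (s + L)) (D s) < 0" using edges_turn_cw[of "s + L"] by simp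
  then show False using range_turns cross2_antisym[of "D s"] by simp
qed

lemma cross2_range_span_neg: "k \<le> L \<Longrightarrow> cross2 (D s - D (s + L)) (D (s + k)) < 0"
proof -
  assume k: "k \<le> L"
  have "cross2 (D s - D (s + L)) (D (s + k)) = cross2 (D s) (D (s + k)) + cross2 (D (s + k)) (D (s + L))"
    by (simp add: cross2_simps cross2_antisym[of "D (s + L)"])
  moreover have "cross2 (D s) (D (s + k)) < 0" if "0 < k"
    using turns_within_range[of 0 k] that k by simp
  moreover have "cross2 (D (s + k)) (D (s + L)) < 0" if "k < L"
    using turns_within_range[of k L] that by simp
  ultimately show ?thesis using range_turns L_pos k by (cases "k = 0"; cases "k = L") (auto simp: cross2_simps)
qed

text \<open>The vector \<open>D s - D (s + L)\<close> has negative cross product with all edge directions of the range,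
  hence with every positive combination \<open>Dv\<close> of two of them; by the Pluecker identity this is
  incompatible with both edges at \<open>v\<^sub>s\<^sub>+\<^sub>m\<close> descending in the direction of \<open>Dv\<close>.\<close>
lemma inner_vertex_not_linear_max:
  assumes ab: "0 < a" "0 < b" and albe: "al \<le> L" "be \<le> L" and m: "1 \<le> m" "m \<le> L"
    and max: "\<forall>Y\<in>P. cross2 Y (a *\<^sub>R D (s + al) + b *\<^sub>R D (s + be))
                \<le> cross2 (W (s + m)) (a *\<^sub>R D (s + al) + b *\<^sub>R D (s + be))"
  shows False
proof -
  define Dv where "Dv = a *\<^sub>R D (s + al) + b *\<^sub>R D (s + be)"
  have vmax: "\<And>k. cross2 (W k) Dv \<le> cross2 (W (s + m)) Dv" using max W_in_P by (simp add: Dv_def)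
  define e x z where "e = D s - D (s + L)" and "x = D (s + m - 1)" and "z = D (s + m)"
  have Wm: "W (s + m) = W (s + m - 1) + x"
    using W_Suc[of "s + m - 1"] m by (simp add: x_def)
  have xD: "0 \<le> cross2 x Dv" using vmax[of "s + m - 1"] by (simp add: Wm cross2_simps)
  have zD: "cross2 z Dv \<le> 0" using vmax[of "Suc (s + m)"] by (simp add: W_Suc z_def cross2_simps)
  have "cross2 e Dv = a * cross2 e (D (s + al)) + b * cross2 e (D (s + be))"
    by (simp add: Dv_def cross2_simps)
  moreover have "cross2 e (D (s + al)) < 0" "cross2 e (D (s + be)) < 0"
    using cross2_range_span_neg albe by (simp_all add: e_def)
  ultimately have eD: "cross2 e Dv < 0" using ab by (simp add: add_neg_neg mult_pos_neg)
  have ex: "cross2 e x < 0" using cross2_range_span_neg[of "m - 1"] m by (simp add: e_def x_def)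
  have ez: "cross2 e z < 0" using cross2_range_span_neg[of m] m by (simp add: e_def z_def)
  have xz: "cross2 x z < 0" using edges_turn_cw[of "s + m - 1"] m by (simp add: x_def z_def)
  have "cross2 e Dv * cross2 x z = cross2 e x * cross2 Dv z + cross2 e z * cross2 x Dv"
    using cross2_pluecker[of e x Dv z] cross2_antisym[of Dv x] by simp
  moreover have "0 < cross2 e Dv * cross2 x z" using eD xz by (simp add: mult_neg_neg)
  moreover have "cross2 e x * cross2 Dv z \<le> 0"
    using ex zD by (simp add: cross2_antisym[of Dv z] mult_nonpos_nonpos)
  moreover have "cross2 e z * cross2 x Dv \<le> 0" using ez xD by (simp add: mult_le_0_iff)
  ultimately show False by linarith
qed

lemma prod_max_on_rho:
  assumes ab: "al < be" "be \<le> L" and Z: "prod_max (s + al) (s + be) Z"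
  obtains m l where "rho_param m l" "Z = edge_point (s + m) l"
proof -
  define Dv where "Dv = height (s + be) Z *\<^sub>R D (s + al) + height (s + al) Z *\<^sub>R D (s + be)"
  have pos: "0 < height (s + al) Z" "0 < height (s + be) Z" using prod_max_pos[OF Z] by simp_all
  have "cross2 (D (s + al)) Dv = height (s + al) Z * cross2 (D (s + al)) (D (s + be))"
    by (simp add: Dv_def cross2_simps)
  then have Dv: "Dv \<noteq> 0" using pos turns_within_range[OF ab] by (auto simp: cross2_simps)
  have Zmax: "\<forall>Y\<in>P. cross2 Y Dv \<le> cross2 Z Dv" using prod_max_linear_max[OF Z] by (simp add: Dv_def)
  have no_inner: "cross2 (W (s + k)) Dv \<noteq> cross2 Z Dv" if "1 \<le> k" "k \<le> L" for k
    using inner_vertex_not_linear_max[OF pos(2) pos(1), of al be k] Zmax that ab by (auto simp: Dv_def)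
  obtain c l where l: "0 \<le> l" "l \<le> 1" and Zc: "Z = edge_point c l"
    and max0: "l < 1 \<Longrightarrow> cross2 (W c) Dv = cross2 Z Dv"
    and max1: "0 < l \<Longrightarrow> cross2 (W (Suc c)) Dv = cross2 Z Dv"
    using linear_max_on_edge[OF Dv _ Zmax] Z prod_max_def by metis
  obtain m where m: "m < n" and Wc: "W c = W (s + m)" "W (Suc c) = W (s + Suc m)"
    and Zm: "Z = edge_point (s + m) l"
    using ex_vertex_shift[of c s l] Zc by metis
  show ?thesis
  proof (cases "l = 1")
    case True
    then have "Z = edge_point (s + Suc m) 0" using Zm edge_point_1 by simp
    moreover have "\<not> Suc m \<le> L" using no_inner[of "Suc m"] max1 True Wc by auto
    ultimately show ?thesis using that[of "Suc m" 0] m by (simp add: rho_param_def)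
  next
    case False
    then have "cross2 (W (s + m)) Dv = cross2 Z Dv" using max0 l Wc by simp
    then have "\<not> (1 \<le> m \<and> m \<le> L)" using no_inner[of m] by blast
    then consider "m = 0" | "L + 1 \<le> m" by linarith
    then show ?thesis
    proof cases
      case 1
      have "\<not> 0 < l"
        using max1 Wc 1 no_inner[of 1] L_pos by auto
      then have "Z = edge_point (s + n) 0" using Zm 1 l W_add_n by (simp add: edge_point_def)
      then show ?thesis using that[of n 0] L_less by (simp add: rho_param_def)
    next
      case 2
      then show ?thesis using that[of m l] Zm l False m by (simp add: rho_param_def)
    qed
  qed
qed

lemma height_rho_edge_at_intersection_nonneg:
  assumes al: "al < al'" "al' \<le> L" and m: "L + 1 \<le> m" "m < n"
    and I: "I = W (Suc (s + al)) + t *\<^sub>R D (s + al)" "0 \<le> t"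
      "I = W (s + al') + r *\<^sub>R D (s + al')" "r \<le> 0"
  shows "0 \<le> height (s + m) I"
proof -
  consider "0 \<le> cross2 (D (s + al)) (D (s + m))" | "cross2 (D (s + al')) (D (s + m)) \<le> 0"
    | "cross2 (D (s + al)) (D (s + m)) < 0" "0 < cross2 (D (s + al')) (D (s + m))"
    by linarith
  then show ?thesis
  proof cases
    case 1
    have "height (s + m) I = height (s + m) (W (Suc (s + al))) + t * cross2 (D (s + al)) (D (s + m))"
      using I(1) by (simp add: height_add cross2_simps)
    then show ?thesis using 1 I(2) height_W_nonneg[of "s + m" "Suc (s + al)"] by simp
  next
    case 2
    have "height (s + m) I = height (s + m) (W (s + al')) + r * cross2 (D (s + al')) (D (s + m))"
      using I(3) by (simp add: height_add cross2_simps)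
    then show ?thesis using 2 I(4) height_W_nonneg[of "s + m" "s + al'"] by (simp add: mult_nonpos_nonpos)
  next
    case 3
    have "m - al < n" "cross2 (D (s + al)) (D (s + al + (m - al))) < 0" using 3 al m by simp_all
    then have "cross2 (D (s + al + (al' - al))) (D (s + al + (m - al))) < 0"
      using cross2_edges_neg_within[of "m - al" "s + al" "al' - al" "m - al"] al m by linarith
    then show ?thesis using 3 al m by simp
  qed
qed

text \<open>The derivative of \<open>h\<^sub>s\<^sub>+\<^sub>a\<^sub>l\<^sub>' / h\<^sub>s\<^sub>+\<^sub>a\<^sub>l\<close> along an edge of \<open>\<rho>\<close> has the sign of this expression, which
  equals \<open>h\<^sub>s\<^sub>+\<^sub>m\<close> at the intersection of the two lines times \<open>cross2 (D (s + al)) (D (s + al'))\<close>.\<close>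
lemma height_ratio_slope_nonpos:
  assumes al: "al < al'" "al' \<le> L" and m: "L + 1 \<le> m" "m < n"
  shows "height (s + al') (W (s + m)) * cross2 (D (s + m)) (D (s + al))
    \<le> height (s + al) (W (s + m)) * cross2 (D (s + m)) (D (s + al'))"
proof -
  define i i' k where "i = s + al" and "i' = s + al'" and "k = s + m"
  have ii': "cross2 (D i) (D i') < 0" using turns_within_range al by (simp add: i_def i'_def)
  obtain I t r where I: "0 \<le> t" "I = W (Suc i) + t *\<^sub>R D i" "r \<le> 0" "I = W i' + r *\<^sub>R D i'"
    by (rule line_intersection_beyond[OF ii'])
  have "height i I = 0" unfolding I(2) by (simp add: height_add height_W_Suc cross2_simps)
  then have hi: "height i X = cross2 (X - I) (D i)" for X using height_diff[of i X I] by simp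
  have "height i' I = 0" unfolding I(4) by (simp add: height_add height_W_self cross2_simps)
  then have hi': "height i' X = cross2 (X - I) (D i')" for X using height_diff[of i' X I] by simp
  have "height i' (W k) * cross2 (D k) (D i) - height i (W k) * cross2 (D k) (D i')
      = height k I * cross2 (D i) (D i')"
    unfolding hi hi' by (simp add: height_def cross2_def algebra_simps)
  moreover have "0 \<le> height k I"
    using height_rho_edge_at_intersection_nonneg[OF al m] I by (simp add: i_def i'_def k_def)
  ultimately show ?thesis using ii' mult_nonneg_nonpos[of "height k I" "cross2 (D i) (D i')"]
    by (simp add: i_def i'_def k_def)
qed

lemma height_ratio_mono_on_edge:
  assumes al: "al < al'" "al' \<le> L" and m: "L + 1 \<le> m" "m < n" and l: "l1 \<le> l2"
  shows "height (s + al') (edge_point (s + m) l1) * height (s + al) (edge_point (s + m) l2)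
    \<le> height (s + al') (edge_point (s + m) l2) * height (s + al) (edge_point (s + m) l1)"
proof -
  have "height (s + al') (edge_point (s + m) l2) * height (s + al) (edge_point (s + m) l1)
      - height (s + al') (edge_point (s + m) l1) * height (s + al) (edge_point (s + m) l2)
      = (l2 - l1) * (height (s + al) (W (s + m)) * cross2 (D (s + m)) (D (s + al'))
          - height (s + al') (W (s + m)) * cross2 (D (s + m)) (D (s + al)))"
    by (simp add: height_edge_point algebra_simps)
  moreover have "0 \<le> (l2 - l1) * (height (s + al) (W (s + m)) * cross2 (D (s + m)) (D (s + al'))
          - height (s + al') (W (s + m)) * cross2 (D (s + m)) (D (s + al)))"
    using height_ratio_slope_nonpos[OF al m] l by simp
  ultimately show ?thesis by linarith
qed

lemma height_inner_rho_vertex_pos: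
  assumes "al \<le> L" "L + 1 < m" "m < n"
  shows "0 < height (s + al) (W (s + m))"
proof -
  have "(s + m) mod n \<noteq> (s + al) mod n" "(s + m) mod n \<noteq> (s + Suc al) mod n"
    using add_mod_eq_add_mod_iff[of m n al s] add_mod_eq_add_mod_iff[of m n "Suc al" s] assms L_less
    by auto
  then show ?thesis using height_W_pos by simp
qed

lemma height_ratio_mono:
  assumes al: "al \<le> al'" "al' \<le> L" and rho: "rho_param m1 l1" "rho_param m2 l2"
    and le: "m1 \<le> m2" "real m1 + l1 \<le> real m2 + l2"
  shows "height (s + al') (edge_point (s + m1) l1) * height (s + al) (edge_point (s + m2) l2)
    \<le> height (s + al') (edge_point (s + m2) l2) * height (s + al) (edge_point (s + m1) l1)"
proof (cases "al = al'")
  case True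
  then show ?thesis by (simp add: mult.commute)
next
  case False
  with al have al: "al < al'" "al' \<le> L" by simp_all
  define R where "R = (\<lambda>X Y. height (s + al') X * height (s + al) Y \<le> height (s + al') Y * height (s + al) X)"
  obtain d where "m2 = m1 + d" using le le_Suc_ex by blast
  with rho le(2) show ?thesis unfolding R_def[symmetric]
  proof (induction d arbitrary: m1 l1)
    case 0
    show ?case
    proof (cases "m1 < n")
      case True
      then show ?thesis using height_ratio_mono_on_edge[OF al, of m1 l1 l2] 0 by (simp add: R_def rho_param_def)
    next
      case False
      then have "l1 = 0" "l2 = 0" using 0 by (simp_all add: rho_param_def)
      then show ?thesis using 0 by (simp add: R_def)
    qed
  next
    case (Suc d)
    define V where "V = edge_point (s + Suc m1) 0"
    have m1: "L + 1 \<le> m1" "m1 < n" using Suc.prems by (auto simp: rho_param_def)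
    have first: "R (edge_point (s + m1) l1) V"
      using height_ratio_mono_on_edge[OF al m1, of l1 1] Suc.prems edge_point_1[of "s + m1"]
      by (simp add: R_def V_def rho_param_def)
    show ?case
    proof (cases "d = 0 \<and> l2 = 0")
      case True
      then show ?thesis using first Suc.prems by (simp add: V_def R_def)
    next
      case False
      then have "Suc m1 < n" using Suc.prems by (auto simp: rho_param_def)
      have "R V (edge_point (s + m2) l2)"
        using Suc.IH[of "Suc m1" 0] Suc.prems m1 by (simp add: V_def R_def rho_param_def)
      moreover have "0 < height (s + al) V"
        using height_inner_rho_vertex_pos[of al "Suc m1"] \<open>Suc m1 < n\<close> m1 al by (simp add: V_def edge_point_def)
      moreover have "0 \<le> height (s + al) (edge_point (s + m1) l1)" "0 \<le> height (s + al) (edge_point (s + m2) l2)"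
        using edge_point_in_P height_nonneg Suc.prems by (simp_all add: rho_param_def)
      ultimately show ?thesis using first mult_cross_le_trans unfolding R_def by blast
    qed
  qed
qed

text \<open>If \<open>Z'\<close> came strictly before \<open>Z\<close> on \<open>\<rho>\<close>, the two ratio inequalities multiply to
  \<open>F(Z) G(Z') \<le> F(Z') G(Z)\<close> for the two products \<open>F\<close> and \<open>G\<close>, against the maximality of \<open>F\<close> at
  \<open>Z\<close> and of \<open>G\<close> at \<open>Z'\<close> unless \<open>F(Z') = F(Z)\<close>, that is, \<open>Z' = Z\<close>.\<close>
lemma prod_max_rho_order:
  assumes ab: "al < be" "be \<le> L" and ab': "al' < be'" "be' \<le> L" and le: "al \<le> al'" "be \<le> be'"
    and Z: "prod_max (s + al) (s + be) Z" "rho_param m1 l1" "Z = edge_point (s + m1) l1"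
    and Z': "prod_max (s + al') (s + be') Z'" "rho_param m2 l2" "Z' = edge_point (s + m2) l2"
    and before: "real m2 + l2 < real m1 + l1"
  shows "Z = Z'"
proof -
  define i j i' j' where "i = s + al" and "j = s + be" and "i' = s + al'" and "j' = s + be'"
  have "real m2 < real (m1 + 1)" using before Z(2) Z'(2) by (simp add: rho_param_def)
  then have m: "m2 \<le> m1" by linarith
  have r1: "height i' Z' * height i Z \<le> height i' Z * height i Z'"
    using height_ratio_mono[of al al' m2 l2 m1 l1] ab' le Z Z' before m by (simp add: i_def i'_def)
  have r2: "height j' Z' * height j Z \<le> height j' Z * height j Z'"
    using height_ratio_mono[of be be' m2 l2 m1 l1] ab' le Z Z' before m by (simp add: j_def j'_def)
  have ZP: "Z \<in> P" "Z' \<in> P" using Z Z' by (simp_all add: prod_max_def)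
  define F F' G G' where "F = height i Z * height j Z" and "F' = height i Z' * height j Z'"
    and "G = height i' Z * height j' Z" and "G' = height i' Z' * height j' Z'"
  have GF: "G' * F \<le> G * F'"
    using mult_mono[OF r1 r2] height_nonneg[OF ZP(1)] height_nonneg[OF ZP(2)]
    by (simp add: F_def F'_def G_def G'_def algebra_simps)
  have FG: "F' \<le> F" "G \<le> G'"
    using Z Z' ZP by (simp_all add: prod_max_def F_def F'_def G_def G'_def i_def j_def i'_def j'_def)
  have "0 < G'" using prod_max_pos[OF Z'(1)] by (simp add: G'_def i'_def j'_def)
  have "0 \<le> F'" using height_nonneg ZP by (simp add: F'_def)
  have "F' = F"
  proof (rule ccontr)
    assume "F' \<noteq> F"
    with FG(1) \<open>0 < G'\<close> have "G' * F' < G' * F" by simp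
    moreover have "G * F' \<le> G' * F'" using FG(2) \<open>0 \<le> F'\<close> by (rule mult_right_mono)
    ultimately show False using GF by linarith
  qed
  moreover have "cross2 (D i) (D j) \<noteq> 0" using turns_within_range[OF ab] by (simp add: i_def j_def)
  ultimately have "Z' = Z"
    using prod_max_unique[of i j Z Z'] Z ZP by (simp add: F_def F'_def i_def j_def)
  then show ?thesis by simp
qed

lemma bpath_rho:
  assumes "rho_param m l"
  shows "bpath n v (real (Suc (s + L) mod n) + (real (m - (L + 1)) + l)) = edge_point (s + m) l"
proof -
  have "Suc (s + L) + (m - (L + 1)) = s + m" using assms by (simp add: rho_param_def)
  then have "(Suc (s + L) mod n + (m - (L + 1))) mod n = (s + m) mod n" by (metis mod_add_left_eq)
  then have "edge_point (Suc (s + L) mod n + (m - (L + 1))) l = edge_point (s + m) l"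
    by (metis W_mod D_mod edge_point_def)
  then show ?thesis
    using bpath_edge_point[of l "Suc (s + L) mod n + (m - (L + 1))"] assms
    by (simp add: rho_param_def add.assoc)
qed

lemma arc_le_rho:
  assumes "rho_param m1 l1" "rho_param m2 l2" "real m1 + l1 \<le> real m2 + l2"
  shows "arc_le n v (Suc (s + L)) s (edge_point (s + m1) l1) (edge_point (s + m2) l2)"
proof -
  have "arc_len n (Suc (s + L)) s = n - (L + 1)"
    using arc_len_add[of "L + 1" n s] L_le n_ge_3 by simp
  moreover have "real (m1 - (L + 1)) + l1 \<le> real (m2 - (L + 1)) + l2"
    "real (m2 - (L + 1)) + l2 \<le> real (n - (L + 1))" "0 \<le> real (m1 - (L + 1)) + l1"
    using assms L_less by (simp_all add: rho_param_def of_nat_diff)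
  ultimately show ?thesis
    unfolding arc_le_def using bpath_rho[OF assms(1)] bpath_rho[OF assms(2)]
    by (intro exI[of _ "real (Suc (s + L) mod n) + (real (m1 - (L + 1)) + l1)"]
        exI[of _ "real (Suc (s + L) mod n) + (real (m2 - (L + 1)) + l2)"]) simp
qed

lemma in_arc_rho: "rho_param m l \<Longrightarrow> in_arc n v (Suc (s + L)) s (edge_point (s + m) l)"
  using arc_le_rho[of m l m l] by (auto simp: arc_le_def in_arc_def)

lemma Zpt_on_rho:
  assumes "al < be" "be \<le> L"
  obtains m l where "rho_param m l" "Zpt n v (s + al) (s + be) = edge_point (s + m) l"
    "prod_max (s + al) (s + be) (Zpt n v (s + al) (s + be))"
proof -
  have "prod_max (s + al) (s + be) (Zpt n v (s + al) (s + be))"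
    using Zpt_prod_max turns_within_range[OF assms] by simp
  with prod_max_on_rho[OF assms] that show ?thesis by metis
qed

lemma Zpt_in_arc: "al < be \<Longrightarrow> be \<le> L \<Longrightarrow> in_arc n v (Suc (s + L)) s (Zpt n v (s + al) (s + be))"
  using Zpt_on_rho in_arc_rho by metis

lemma Zpt_arc_mono:
  assumes ab: "al < be" "be \<le> L" and ab': "al' < be'" "be' \<le> L" and le: "al \<le> al'" "be \<le> be'"
  shows "arc_le n v (Suc (s + L)) s (Zpt n v (s + al) (s + be)) (Zpt n v (s + al') (s + be'))"
proof -
  obtain m1 l1 where Z: "rho_param m1 l1" "Zpt n v (s + al) (s + be) = edge_point (s + m1) l1"
    "prod_max (s + al) (s + be) (Zpt n v (s + al) (s + be))"
    using Zpt_on_rho[OF ab] .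
  obtain m2 l2 where Z': "rho_param m2 l2" "Zpt n v (s + al') (s + be') = edge_point (s + m2) l2"
    "prod_max (s + al') (s + be') (Zpt n v (s + al') (s + be'))"
    using Zpt_on_rho[OF ab'] .
  show ?thesis
  proof (cases "real m1 + l1 \<le> real m2 + l2")
    case True
    then show ?thesis using arc_le_rho Z Z' by simp
  next
    case False
    then have "Zpt n v (s + al) (s + be) = Zpt n v (s + al') (s + be')"
      using prod_max_rho_order[OF ab ab' le Z(3,1,2) Z'(3,1,2)] by simp
    then show ?thesis using arc_le_rho[OF Z'(1) Z'(1)] Z' by simp
  qed
qed

lemma eprec_offsets_less:
  assumes "eprec n v ((s + al) mod n) ((s + be) mod n)" "al \<le> L" "be \<le> L"
  shows "al < be"
proof -
  have "cross2 (D (s + al)) (D (s + be)) < 0"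
    using eprec_imp_cross2_neg[OF assms(1)] by (simp add: D_mod)
  moreover have "\<not> be < al"
    using turns_within_range[of be al] assms calculation cross2_antisym[of "D (s + be)"] by auto
  ultimately show ?thesis by (cases "al = be") (auto simp: cross2_simps)
qed

lemma epreceq_offsets_le:
  assumes "epreceq n v ((s + al) mod n) ((s + al') mod n)" "al \<le> L" "al' \<le> L"
  shows "al \<le> al'"
  using assms eprec_offsets_less[of al al'] add_mod_eq_add_mod_iff[of al n al' s] L_less
  by (auto simp: epreceq_def)

definition range_edges :: "nat set" where
  "range_edges = {(s + k) mod n | k. k \<le> L}"

lemma range_pair_offsets:
  assumes "i \<in> range_edges" "j \<in> range_edges" "eprec n v i j"
  obtains al be where "al < be" "be \<le> L" "i = (s + al) mod n" "j = (s + be) mod n"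
proof -
  obtain al be where "i = (s + al) mod n" "j = (s + be) mod n" "al \<le> L" "be \<le> L"
    using assms(1,2) unfolding range_edges_def by blast
  with assms(3) show ?thesis using that eprec_offsets_less by blast
qed

lemma Zpt_range_in_arc:
  assumes "i \<in> range_edges" "j \<in> range_edges" "eprec n v i j"
  shows "in_arc n v (Suc (s + L)) s (Zpt n v i j)"
  using range_pair_offsets[OF assms] Zpt_in_arc Zpt_mod by metis

lemma Zpt_range_arc_mono:
  assumes "i \<in> range_edges" "j \<in> range_edges" "eprec n v i j"
    and "i' \<in> range_edges" "j' \<in> range_edges" "eprec n v i' j'"
    and "epreceq n v i i'" "epreceq n v j j'"
  shows "arc_le n v (Suc (s + L)) s (Zpt n v i j) (Zpt n v i' j')"
proof -
  obtain al be where "al < be" "be \<le> L" "i = (s + al) mod n" "j = (s + be) mod n"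
    using range_pair_offsets[OF assms(1-3)] .
  moreover obtain al' be' where "al' < be'" "be' \<le> L" "i' = (s + al') mod n" "j' = (s + be') mod n"
    using range_pair_offsets[OF assms(4-6)] .
  ultimately show ?thesis
    using assms(7,8) epreceq_offsets_le[of al al'] epreceq_offsets_le[of be be'] Zpt_arc_mono[of al be al' be']
    by (simp add: Zpt_mod)
qed

end

theorem lemma6:
  fixes n :: nat and v :: "nat \<Rightarrow> real^2" and s t :: nat
  assumes "convex_cw_polygon n v"
    and "no_parallel_edges n v"
    and "s < n" and "t < n"
    and "epreceq n v s t"
  defines "S \<equiv> {(i, j). i \<in> edge_range n s t \<and> j \<in> edge_range n s t \<and> eprec n v i j}"
  shows "(\<forall>(i, j)\<in>S. in_arc n v (Suc t) s (Zpt n v i j)) \<and>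
         (\<forall>(i, j)\<in>S. \<forall>(i', j')\<in>S. epreceq n v i i' \<and> epreceq n v j j' \<longrightarrow>
              arc_le n v (Suc t) s (Zpt n v i j) (Zpt n v i' j'))"
proof -
  interpret cw_polygon n v using assms(1,2) by unfold_locales
  define L where "L = (t + n - s) mod n"
  have t: "t = (s + L) mod n" using add_diff_mod_cancel[OF assms(3,4)] by (simp add: L_def)
  have range: "edge_range n s t = {(s + k) mod n | k. k \<le> L}" by (simp add: edge_range_def L_def)
  show ?thesis
  proof (cases "L = 0")
    case True
    then have "edge_range n s t = {s mod n}" unfolding range by auto
    then show ?thesis by (auto simp: S_def eprec_def)
  next
    case False
    have "L < n" using n_pos by (simp add: L_def)
    then have "s \<noteq> t" using t False add_mod_eq_add_mod_iff[of L n 0 s] assms(3) by auto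
    then have "eprec n v s t" using assms(3-5) by (simp add: epreceq_def)
    then have "cross2 (D s) (D (s + L)) < 0" using eprec_imp_cross2_neg t D_mod by metis
    with \<open>L < n\<close> interpret cw_turning_range n v s L using False by unfold_locales simp_all
    have "in_arc n v (Suc t) s = in_arc n v (Suc (s + L)) s"
      "arc_le n v (Suc t) s = arc_le n v (Suc (s + L)) s"
      using t by (simp_all add: fun_eq_iff in_arc_def arc_le_def arc_len_def mod_Suc_eq)
    then show ?thesis
      using Zpt_range_in_arc Zpt_range_arc_mono unfolding S_def range range_edges_def[symmetric] by auto
  qed
qed

end
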